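(* Let $p\in(0,1/2)$ be a fixed constant, and let $k=k(n)$ and $\delta=\delta(n)$ satisfy $k=o(n)$ and $\delta=o(1)$ as $n\to\infty$. Then there exists a variable-length algorithm that computes $\mathsf{TH}_k$ from noisy queries with worst-case error probability at most $\delta$, i.e. $\max_{\mathbf{x}\in\{0,1\}^n}\mathbb{P}(\widehat{\mathsf{TH}}_k\neq\mathsf{TH}_k(\mathbf{x})\mid\mathbf{x})\le\delta$, and whose number of queries $M$ satisfies \[ \mathbb{E}[M\mid\mathbf{x}]\le(1+o(1))\,\frac{n\log\frac{k}{\delta}}{D_{\mathsf{KL}}(p\|1-p)} \] for every input instance $\mathbf{x}\in\{0,1\}^n$.
   Context: For $\mathbf{x}=(x_1,\dots,x_n)\in\{0,1\}^n$ and a positive integer $k$, the threshold-$k$ function is $\mathsf{TH}_k(\mathbf{x})=1$ if $\sum_{i=1}^n x_i\ge k$ and $\mathsf{TH}_k(\mathbf{x})=0$ otherwise. Noisy query model: at each time step the algorithm chooses an index $i\in[n]$ (possibly depending on all previous responses) and observes $x_i\oplus Z$, where $Z\sim\mathsf{Bern}(p)$ is independent of everything else; $p$ is known to the algorithm. A variable-length algorithm may decide adaptively when to stop (so the number of queries $M$ is random), and then outputs an estimate $\widehat{\mathsf{TH}}_k\in\{0,1\}$. $D_{\mathsf{KL}}(p\|1-p)=(1-2p)\log\frac{1-p}{p}$; $\log$ is the natural logarithm. The $o(1)$ terms are with respect to $n\to\infty$. *)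

theory Defs
  imports "HOL-Probability.Probability"
begin

text \<open>A (possibly randomized)
variable-length adaptive algorithm is given in behavioural form: given the history
of (queried index, observed noisy response) pairs, it chooses (randomly) either
Inl i (query index i) or Inr b (stop and output b).\<close>

type_synonym hist = "(nat \<times> bool) list"

datatype run_state = Running hist | Stopped bool

definition TH :: "nat \<Rightarrow> bool list \<Rightarrow> bool" where
  "TH k x = (k \<le> length (filter id x))"

definition KL_p :: "real \<Rightarrow> real" where
  "KL_p p = (1 - 2 * p) * ln ((1 - p) / p)"

definition valid_alg :: "nat \<Rightarrow> (hist \<Rightarrow> (nat + bool) pmf) \<Rightarrow> bool" where
  "valid_alg n A = (\<forall>h. set_pmf (A h) \<subseteq> Inl ` {..<n} \<union> range Inr)"

text \<open>One step: query x_i and observe x_i XOR Z with Z ~ Bern(p) (True with prob. p).\<close>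
definition step :: "(hist \<Rightarrow> (nat + bool) pmf) \<Rightarrow> real \<Rightarrow> bool list \<Rightarrow> run_state \<Rightarrow> run_state pmf" where
  "step A p x s = (case s of
      Stopped b \<Rightarrow> return_pmf (Stopped b)
    | Running h \<Rightarrow> bind_pmf (A h) (\<lambda>a. case a of
          Inr b \<Rightarrow> return_pmf (Stopped b)
        | Inl i \<Rightarrow> map_pmf (\<lambda>z. Running (h @ [(i, (x ! i) \<noteq> z)])) (bernoulli_pmf p)))"

text \<open>Distribution of the state after t algorithm actions. Being Running at time t
means exactly t queries have been made and the algorithm has not stopped.\<close>
fun state_dist :: "(hist \<Rightarrow> (nat + bool) pmf) \<Rightarrow> real \<Rightarrow> bool list \<Rightarrow> nat \<Rightarrow> run_state pmf" where
  "state_dist A p x 0 = return_pmf (Running [])"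
| "state_dist A p x (Suc t) = bind_pmf (state_dist A p x t) (step A p x)"

definition is_running :: "run_state \<Rightarrow> bool" where
  "is_running s = (case s of Running _ \<Rightarrow> True | Stopped _ \<Rightarrow> False)"

definition output_prob :: "(hist \<Rightarrow> (nat + bool) pmf) \<Rightarrow> real \<Rightarrow> bool list \<Rightarrow> bool \<Rightarrow> real" where
  "output_prob A p x b = (SUP t. measure_pmf.prob (state_dist A p x t) {Stopped b})"

text \<open>Error probability: P(output \<noteq> TH_k(x)); non-termination counts as an error.\<close>
definition error_prob :: "(hist \<Rightarrow> (nat + bool) pmf) \<Rightarrow> real \<Rightarrow> nat \<Rightarrow> bool list \<Rightarrow> real" where
  "error_prob A p k x = 1 - output_prob A p x (TH k x)"

text \<open>E[M] = sum_{t>=1} P(M >= t), as an extended nonnegative real.\<close>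
definition expected_queries :: "(hist \<Rightarrow> (nat + bool) pmf) \<Rightarrow> real \<Rightarrow> bool list \<Rightarrow> ennreal" where
  "expected_queries A p x =
     (\<Sum>t. ennreal (measure_pmf.prob (state_dist A p x (Suc t)) {s. is_running s}))"

end

theory Submission
  imports Defs "HOL-Real_Asymp.Real_Asymp"
begin

text \<open>
  The algorithm reads the bits one at a time. On each bit it runs a random walk driven by the noisy
  answers (up on answer 1, down on answer 0) until the walk hits \<open>a\<close>, declaring the bit a one, or
  \<open>-b\<close>, declaring it a zero. It answers 1 as soon as \<open>k\<close> ones are declared and 0 when the input is
  exhausted. With \<open>r = p / (1 - p)\<close>, the function \<open>m \<mapsto> r ^ m\<close> is harmonic for a walk stepping down
  with probability \<open>p\<close>, so a zero is declared a one with probability at most \<open>r ^ a\<close> and a one is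
  declared a zero with probability at most \<open>r ^ b\<close>. A wrong answer needs a false positive (if
  \<open>TH k x\<close> is false) or a false negative among the first \<open>k\<close> ones (if it is true), so the error is
  at most \<open>n r ^ a\<close> resp. \<open>k r ^ b\<close>. With drift \<open>\<mu> = 1 - 2 p\<close>, a zero costs at most \<open>b / \<mu>\<close> queries
  in expectation and each declared one at most \<open>a / (\<mu> (1 - r ^ b))\<close>, which also pays for the ones
  that get rejected; at most \<open>k\<close> ones are declared. Both bounds come from potentials on the history
  that are supermartingales under the query process.

  With \<open>\<lambda> = ln ((1 - p) / p)\<close> one has \<open>KL_p p = \<mu> \<lambda>\<close>. Choosing \<open>a \<approx> ln (n / \<delta>) / \<lambda>\<close> and
  \<open>b \<approx> ln (k / \<delta>) / \<lambda>\<close> makes the error at most \<open>\<delta>\<close> and the expected number of queries at most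
  \<open>(n ln (k / \<delta>) + k ln (n / \<delta>)) / KL_p p\<close> up to rounding, and
  \<open>k ln (n / \<delta>) = k ln (n / k) + k ln (k / \<delta>) = o (n ln (k / \<delta>))\<close> because \<open>k = o(n)\<close>.
\<close>

section \<open>Potential bounds for deterministic algorithms\<close>

declare state_dist.simps(2) [simp del]

lemma state_dist_supermartingale:
  assumes step: "\<And>s. (\<integral>\<^sup>+s'. G s' + c s' \<partial>step A p x s) \<le> G s"
  shows "(\<integral>\<^sup>+s. G s \<partial>state_dist A p x t) + (\<Sum>j<t. \<integral>\<^sup>+s. c s \<partial>state_dist A p x (Suc j))
    \<le> G (Running [])"
proof (induction t)
  case 0
  then show ?case by simp
next
  case (Suc t)
  let ?X = "state_dist A p x"
  have "(\<integral>\<^sup>+s. G s \<partial>?X (Suc t)) + (\<integral>\<^sup>+s. c s \<partial>?X (Suc t))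
      = (\<integral>\<^sup>+s. (\<integral>\<^sup>+s'. G s' + c s' \<partial>step A p x s) \<partial>?X t)"
    by (simp add: nn_integral_add state_dist.simps(2))
  also have "\<dots> \<le> (\<integral>\<^sup>+s. G s \<partial>?X t)"
    by (intro nn_integral_mono step)
  finally have "(\<integral>\<^sup>+s. G s \<partial>?X (Suc t)) + (\<Sum>j<Suc t. \<integral>\<^sup>+s. c s \<partial>?X (Suc j))
      \<le> (\<integral>\<^sup>+s. G s \<partial>?X t) + (\<Sum>j<t. \<integral>\<^sup>+s. c s \<partial>?X (Suc j))"
    by (simp add: algebra_simps add_right_mono)
  then show ?case using Suc by (rule order_trans)
qed

definition det_alg :: "(hist \<Rightarrow> nat + bool) \<Rightarrow> hist \<Rightarrow> (nat + bool) pmf" where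
  "det_alg f h = return_pmf (f h)"

lemma valid_alg_det_alg:
  assumes "\<And>h i. f h = Inl i \<Longrightarrow> i < n"
  shows "valid_alg n (det_alg f)"
  unfolding valid_alg_def det_alg_def
proof
  fix h
  show "set_pmf (return_pmf (f h)) \<subseteq> Inl ` {..<n} \<union> range Inr"
    using assms[of h] by (cases "f h") auto
qed

lemma nn_integral_step_det_alg:
  assumes "0 \<le> p" "p \<le> 1" and "\<And>s. 0 \<le> F s"
  shows "(\<integral>\<^sup>+s'. ennreal (F s') \<partial>step (det_alg f) p x (Running h)) = ennreal (case f h of
      Inr b \<Rightarrow> F (Stopped b)
    | Inl i \<Rightarrow> p * F (Running (h @ [(i, \<not> x ! i)])) + (1 - p) * F (Running (h @ [(i, x ! i)])))"
  using assms by (cases "f h") (simp_all add: step_def det_alg_def ennreal_mult' mult.commute)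

definition state_potential :: "(hist \<Rightarrow> real) \<Rightarrow> (bool \<Rightarrow> real) \<Rightarrow> run_state \<Rightarrow> real" where
  "state_potential \<Phi> F s = (case s of Running h \<Rightarrow> \<Phi> h | Stopped b \<Rightarrow> F b)"

definition query_potential ::
    "(hist \<Rightarrow> nat + bool) \<Rightarrow> real \<Rightarrow> bool list \<Rightarrow> real \<Rightarrow> (hist \<Rightarrow> real) \<Rightarrow> bool" where
  "query_potential f p x c \<Phi> \<longleftrightarrow> (\<forall>h. 0 \<le> \<Phi> h) \<and>
     (\<forall>h i. f h = Inl i \<longrightarrow> p * \<Phi> (h @ [(i, \<not> x ! i)]) + (1 - p) * \<Phi> (h @ [(i, x ! i)]) + c \<le> \<Phi> h)"

lemma det_alg_potential_step:
  assumes p: "0 \<le> p" "p \<le> 1" and c: "0 \<le> c" and \<Phi>: "query_potential f p x c \<Phi>"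
    and F: "\<And>b. 0 \<le> F b" and stop: "\<And>h b. f h = Inr b \<Longrightarrow> F b \<le> \<Phi> h"
  defines "V \<equiv> state_potential \<Phi> F" and "C \<equiv> \<lambda>s. c * indicator {s. is_running s} s"
  shows "(\<integral>\<^sup>+s'. ennreal (V s') + ennreal (C s') \<partial>step (det_alg f) p x s) \<le> V s"
proof (cases s)
  case (Running h)
  have V: "0 \<le> V s" and C: "0 \<le> C s" for s
    using \<Phi> F c by (simp_all add: V_def C_def state_potential_def query_potential_def split: run_state.split)
  have "(\<integral>\<^sup>+s'. ennreal (V s') + ennreal (C s') \<partial>step (det_alg f) p x s)
      = (\<integral>\<^sup>+s'. ennreal (V s' + C s') \<partial>step (det_alg f) p x (Running h))"
    using V C by (simp add: Running)
  also have "\<dots> = ennreal (case f h of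
      Inr b \<Rightarrow> V (Stopped b) + C (Stopped b)
    | Inl i \<Rightarrow> p * (V (Running (h @ [(i, \<not> x ! i)])) + C (Running (h @ [(i, \<not> x ! i)])))
        + (1 - p) * (V (Running (h @ [(i, x ! i)])) + C (Running (h @ [(i, x ! i)]))))"
    using V C by (intro nn_integral_step_det_alg p) (simp add: add_nonneg_nonneg)
  also have "\<dots> \<le> V s"
  proof (cases "f h")
    case (Inl i)
    let ?\<Phi>1 = "\<Phi> (h @ [(i, \<not> x ! i)])" and ?\<Phi>0 = "\<Phi> (h @ [(i, x ! i)])"
    have "p * ?\<Phi>1 + (1 - p) * ?\<Phi>0 + c \<le> \<Phi> h"
      using \<Phi> Inl by (simp add: query_potential_def)
    then have "p * (?\<Phi>1 + c) + (1 - p) * (?\<Phi>0 + c) \<le> \<Phi> h"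
      by argo
    then show ?thesis
      by (simp add: Inl Running V_def C_def state_potential_def is_running_def ennreal_leI)
  next
    case (Inr b)
    then show ?thesis
      using stop[OF Inr] by (simp add: Running V_def C_def state_potential_def is_running_def ennreal_leI)
  qed
  finally show ?thesis .
qed (simp add: step_def V_def C_def state_potential_def is_running_def)

lemma det_alg_potential_bound:
  assumes "0 \<le> p" "p \<le> 1" and c: "0 \<le> c" and "query_potential f p x c \<Phi>"
    and "\<And>b. 0 \<le> F b" and "\<And>h b. f h = Inr b \<Longrightarrow> F b \<le> \<Phi> h"
  shows "(\<integral>\<^sup>+s. state_potential \<Phi> F s \<partial>state_dist (det_alg f) p x t)
    + ennreal c * (\<Sum>j<t. emeasure (state_dist (det_alg f) p x (Suc j)) {s. is_running s}) \<le> \<Phi> []"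
proof -
  have "(\<integral>\<^sup>+s. state_potential \<Phi> F s \<partial>state_dist (det_alg f) p x t)
      + (\<Sum>j<t. \<integral>\<^sup>+s. c * indicator {s. is_running s} s \<partial>state_dist (det_alg f) p x (Suc j))
      \<le> state_potential \<Phi> F (Running [])"
    using det_alg_potential_step[OF assms] by (rule state_dist_supermartingale)
  then show ?thesis
    using c by (simp add: state_potential_def ennreal_mult' ennreal_indicator
        nn_integral_cmult_indicator sum_distrib_left)
qed

lemma det_alg_running_prob_sum_le:
  assumes p: "0 \<le> p" "p \<le> 1" and \<Phi>: "query_potential f p x 1 \<Phi>"
  shows "(\<Sum>j<t. measure_pmf.prob (state_dist (det_alg f) p x (Suc j)) {s. is_running s}) \<le> \<Phi> []"
proof -
  have "(\<integral>\<^sup>+s. state_potential \<Phi> (\<lambda>_. 0) s \<partial>state_dist (det_alg f) p x t)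
      + ennreal 1 * (\<Sum>j<t. emeasure (state_dist (det_alg f) p x (Suc j)) {s. is_running s}) \<le> \<Phi> []"
    by (rule det_alg_potential_bound) (use p \<Phi> in \<open>auto simp: query_potential_def\<close>)
  then have "(\<Sum>j<t. emeasure (state_dist (det_alg f) p x (Suc j)) {s. is_running s}) \<le> \<Phi> []"
    by (simp add: order_trans[OF add_increasing[OF zero_le order_refl]])
  then show ?thesis
    using \<Phi> by (simp add: measure_pmf.emeasure_eq_measure sum_ennreal ennreal_le_iff query_potential_def)
qed

lemma expected_queries_det_alg_le:
  assumes "0 \<le> p" "p \<le> 1" and "query_potential f p x 1 \<Phi>"
  shows "expected_queries (det_alg f) p x \<le> \<Phi> []"
  unfolding expected_queries_def
proof (rule suminf_le_const[OF summableI])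
  fix t
  show "(\<Sum>j<t. ennreal (measure_pmf.prob (state_dist (det_alg f) p x (Suc j)) {s. is_running s})) \<le> \<Phi> []"
    using det_alg_running_prob_sum_le[OF assms] by (simp add: sum_ennreal ennreal_leI)
qed

lemma det_alg_running_prob_tendsto_0:
  assumes "0 \<le> p" "p \<le> 1" and "query_potential f p x 1 \<Phi>"
  shows "(\<lambda>t. measure_pmf.prob (state_dist (det_alg f) p x (Suc t)) {s. is_running s}) \<longlonglongrightarrow> 0"
proof (rule summable_LIMSEQ_zero)
  show "summable (\<lambda>t. measure_pmf.prob (state_dist (det_alg f) p x (Suc t)) {s. is_running s})"
    using det_alg_running_prob_sum_le[OF assms] by (intro summableI_nonneg_bounded) auto
qed

lemma det_alg_stop_prob_le:
  assumes p: "0 \<le> p" "p \<le> 1" and W: "query_potential f p x 0 W"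
    and stop: "\<And>h. f h = Inr b \<Longrightarrow> 1 \<le> W h"
  shows "measure_pmf.prob (state_dist (det_alg f) p x t) {Stopped b} \<le> W []"
proof -
  let ?X = "state_dist (det_alg f) p x t"
  have bound: "(\<integral>\<^sup>+s. state_potential W (\<lambda>b'. of_bool (b' = b)) s \<partial>?X)
      + ennreal 0 * (\<Sum>j<t. emeasure (state_dist (det_alg f) p x (Suc j)) {s. is_running s}) \<le> W []"
    by (rule det_alg_potential_bound) (use p W stop in \<open>auto simp: query_potential_def\<close>)
  have "emeasure ?X {Stopped b} = (\<integral>\<^sup>+s. indicator {Stopped b} s \<partial>?X)"
    by simp
  also have "\<dots> \<le> (\<integral>\<^sup>+s. state_potential W (\<lambda>b'. of_bool (b' = b)) s \<partial>?X)"
    by (intro nn_integral_mono) (auto simp: state_potential_def split: split_indicator run_state.split)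
  also have "\<dots> \<le> W []"
    using bound by simp
  finally show ?thesis
    using W by (simp add: measure_pmf.emeasure_eq_measure ennreal_le_iff query_potential_def)
qed

text \<open>The time potential \<open>\<Phi>\<close> guarantees that the algorithm stops almost surely, which matters
  because non-termination counts as an error.\<close>

lemma error_prob_det_alg_le:
  assumes p: "0 \<le> p" "p \<le> 1" and \<Phi>: "query_potential f p x 1 \<Phi>" and W: "query_potential f p x 0 W"
    and stop: "\<And>h b. f h = Inr b \<Longrightarrow> b \<noteq> TH k x \<Longrightarrow> 1 \<le> W h"
  shows "error_prob (det_alg f) p k x \<le> W []"
proof -
  define T where "T = TH k x"
  let ?X = "state_dist (det_alg f) p x"
  let ?R = "\<lambda>t. measure_pmf.prob (?X t) {Stopped T}"
  let ?U = "\<lambda>t. measure_pmf.prob (?X t) {s. is_running s}"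
  have cover: "1 \<le> ?R t + measure_pmf.prob (?X t) {Stopped (\<not> T)} + ?U t" for t
  proof -
    have "UNIV = {Stopped T} \<union> ({Stopped (\<not> T)} \<union> {s. is_running s})"
      by (auto simp: is_running_def split: run_state.split)
    then have "1 = measure_pmf.prob (?X t) ({Stopped T} \<union> ({Stopped (\<not> T)} \<union> {s. is_running s}))"
      by (metis measure_pmf.prob_space space_measure_pmf)
    also have "\<dots> \<le> ?R t + (measure_pmf.prob (?X t) {Stopped (\<not> T)} + ?U t)"
      by (intro order_trans[OF measure_Un_le] add_left_mono measure_Un_le) auto
    finally show ?thesis by simp
  qed
  have wrong: "measure_pmf.prob (?X t) {Stopped (\<not> T)} \<le> W []" for t
    using p W by (rule det_alg_stop_prob_le) (use stop T_def in blast)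
  have error_le: "error_prob (det_alg f) p k x \<le> 1 - ?R t" for t
    unfolding error_prob_def output_prob_def T_def[symmetric]
    by (intro diff_left_mono cSUP_upper bdd_aboveI[of _ 1]) auto
  have "error_prob (det_alg f) p k x \<le> W [] + ?U (Suc t)" for t
    using cover[of "Suc t"] wrong[of "Suc t"] error_le[of "Suc t"] by linarith
  moreover have "(\<lambda>t. W [] + ?U (Suc t)) \<longlonglongrightarrow> W [] + 0"
    by (intro tendsto_add tendsto_const det_alg_running_prob_tendsto_0[OF p \<Phi>])
  ultimately show ?thesis
    by (intro LIMSEQ_le_const[where X = "\<lambda>t. W [] + ?U (Suc t)"]) auto
qed

section \<open>The scanning algorithm\<close>

record scan = pos :: nat  walk :: int  hits :: nat

definition walk_incr :: "bool \<Rightarrow> int" where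
  "walk_incr y = (if y then 1 else -1)"

lemma walk_incr_simps [simp]: "walk_incr True = 1" "walk_incr False = -1"
  by (simp_all add: walk_incr_def)

definition scan_update :: "nat \<Rightarrow> nat \<Rightarrow> nat \<Rightarrow> nat \<Rightarrow> scan \<Rightarrow> bool \<Rightarrow> scan" where
  "scan_update n k a b s y = (let w = walk s + walk_incr y in
     if n \<le> pos s \<or> k \<le> hits s then s
     else if int a \<le> w then \<lparr>pos = Suc (pos s), walk = 0, hits = Suc (hits s)\<rparr>
     else if w \<le> - int b then \<lparr>pos = Suc (pos s), walk = 0, hits = hits s\<rparr>
     else s\<lparr>walk := w\<rparr>)"

definition scan_run :: "nat \<Rightarrow> nat \<Rightarrow> nat \<Rightarrow> nat \<Rightarrow> hist \<Rightarrow> scan" where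
  "scan_run n k a b h = foldl (\<lambda>s q. scan_update n k a b s (snd q)) \<lparr>pos = 0, walk = 0, hits = 0\<rparr> h"

lemma scan_run_snoc: "scan_run n k a b (h @ [q]) = scan_update n k a b (scan_run n k a b h) (snd q)"
  by (simp add: scan_run_def)

definition scan_action :: "nat \<Rightarrow> nat \<Rightarrow> nat \<Rightarrow> nat \<Rightarrow> hist \<Rightarrow> nat + bool" where
  "scan_action n k a b h = (let s = scan_run n k a b h in
     if k \<le> hits s then Inr True else if n \<le> pos s then Inr False else Inl (pos s))"

text \<open>The analysis tracks counters that depend on the hidden input \<open>x\<close>. Only rejected ones among
  the first \<open>k\<close> ones of \<open>x\<close> are counted as false negatives: only those can make the answer 0 wrong.\<close>

record ghost = scan + true_pos :: nat  false_pos :: nat  false_neg :: nat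

definition ones_before :: "bool list \<Rightarrow> nat \<Rightarrow> nat" where
  "ones_before x i = length (filter id (take i x))"

lemma ones_before_Suc: "i < length x \<Longrightarrow> ones_before x (Suc i) = ones_before x i + of_bool (x ! i)"
  by (simp add: ones_before_def take_Suc_conv_app_nth)

lemma ones_before_mono: "i \<le> j \<Longrightarrow> ones_before x i \<le> ones_before x j"
proof -
  assume "i \<le> j"
  then have "take j x = take i x @ take (j - i) (drop i x)"
    by (metis le_add_diff_inverse take_add)
  then show ?thesis
    by (simp add: ones_before_def)
qed

definition zeros_from :: "bool list \<Rightarrow> nat \<Rightarrow> nat" where
  "zeros_from x i = length (filter Not (drop i x))"

lemma zeros_from_eq: "i < length x \<Longrightarrow> zeros_from x i = of_bool (\<not> x ! i) + zeros_from x (Suc i)"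
  by (simp add: zeros_from_def Cons_nth_drop_Suc[symmetric])

lemma zeros_from_le: "zeros_from x i \<le> length x"
  unfolding zeros_from_def by (metis diff_le_self length_drop length_filter_le order_trans)

locale scan_ghost =
  fixes n k a b :: nat and x :: "bool list"
  assumes a_pos: "1 \<le> a" and b_pos: "1 \<le> b" and length_x: "length x = n"
begin

definition ghost_update :: "ghost \<Rightarrow> bool \<Rightarrow> ghost" where
  "ghost_update g y = (let w = walk g + walk_incr y; v = x ! pos g in
     if n \<le> pos g \<or> k \<le> hits g then g
     else if int a \<le> w then g\<lparr>pos := Suc (pos g), walk := 0, hits := Suc (hits g),
       true_pos := true_pos g + of_bool v, false_pos := false_pos g + of_bool (\<not> v)\<rparr>
     else if w \<le> - int b then g\<lparr>pos := Suc (pos g), walk := 0,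
       false_neg := false_neg g + of_bool (v \<and> ones_before x (pos g) < k)\<rparr>
     else g\<lparr>walk := w\<rparr>)"

definition ghost_run :: "hist \<Rightarrow> ghost" where
  "ghost_run h = foldl (\<lambda>g q. ghost_update g (snd q))
     \<lparr>pos = 0, walk = 0, hits = 0, true_pos = 0, false_pos = 0, false_neg = 0\<rparr> h"

lemma ghost_run_snoc: "ghost_run (h @ [q]) = ghost_update (ghost_run h) (snd q)"
  by (simp add: ghost_run_def)

lemma scan_run_eq_ghost_run: "scan_run n k a b h = scan.truncate (ghost_run h)"
proof (induction h rule: rev_induct)
  case Nil
  show ?case by (simp add: scan_run_def ghost_run_def scan.truncate_def)
next
  case (snoc q h)
  then show ?case
    by (simp add: scan_run_snoc ghost_run_snoc scan_update_def ghost_update_def scan.truncate_def Let_def)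
qed

definition ghost_inv :: "ghost \<Rightarrow> bool" where
  "ghost_inv g \<longleftrightarrow> pos g \<le> n \<and> - int b < walk g \<and> walk g < int a
     \<and> hits g = true_pos g + false_pos g \<and> true_pos g \<le> ones_before x (pos g)
     \<and> min (ones_before x (pos g)) k \<le> true_pos g + false_neg g"

lemma ghost_inv_update: "ghost_inv g \<Longrightarrow> ghost_inv (ghost_update g y)"
  using a_pos b_pos length_x
  by (auto simp: ghost_inv_def ghost_update_def walk_incr_def Let_def ones_before_Suc split: if_splits)

lemma ghost_inv_run: "ghost_inv (ghost_run h)"
proof (induction h rule: rev_induct)
  case Nil
  show ?case using a_pos b_pos by (simp add: ghost_run_def ghost_inv_def ones_before_def)
next
  case (snoc q h)
  then show ?case by (simp add: ghost_run_snoc ghost_inv_update)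
qed

lemma ghost_update_cases:
  assumes "ghost_inv g" "pos g < n" "hits g < k"
  obtains (accept) "walk g + walk_incr y = int a"
    "ghost_update g y = g\<lparr>pos := Suc (pos g), walk := 0, hits := Suc (hits g),
       true_pos := true_pos g + of_bool (x ! pos g), false_pos := false_pos g + of_bool (\<not> x ! pos g)\<rparr>"
  | (reject) "walk g + walk_incr y = - int b"
    "ghost_update g y = g\<lparr>pos := Suc (pos g), walk := 0,
       false_neg := false_neg g + of_bool (x ! pos g \<and> ones_before x (pos g) < k)\<rparr>"
  | (continue) "- int b < walk g + walk_incr y" "walk g + walk_incr y < int a"
    "ghost_update g y = g\<lparr>walk := walk g + walk_incr y\<rparr>"
proof -
  let ?w = "walk g + walk_incr y"
  have "- int b \<le> ?w" "?w \<le> int a"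
    using assms(1) by (auto simp: ghost_inv_def walk_incr_def)
  then consider "?w = int a" | "?w = - int b" | "- int b < ?w" "?w < int a"
    by fastforce
  then show thesis
    using assms(2,3) a_pos b_pos that by cases (auto simp: ghost_update_def Let_def)
qed

end

section \<open>Analysis of the scanning algorithm\<close>

lemma convex_mix_le:
  fixes p :: real
  assumes "0 \<le> p" "p \<le> 1" "u \<le> B + R1" "v \<le> B + R0" "p * R1 + (1 - p) * R0 + c = R"
  shows "p * u + (1 - p) * v + c \<le> B + R"
proof -
  have "p * u + (1 - p) * v \<le> p * (B + R1) + (1 - p) * (B + R0)"
    using assms(1-4) by (intro add_mono mult_left_mono) auto
  also have "\<dots> + c = B + R"
    using assms(5) by (simp add: algebra_simps)
  finally show ?thesis by simp
qed

locale scan_analysis = scan_ghost +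
  fixes p :: real
  assumes p_pos: "0 < p" and p_less_half: "p < 1/2"
begin

definition odds :: real where "odds = p / (1 - p)"
definition drift :: real where "drift = 1 - 2 * p"

text \<open>A one costs at most \<open>a / drift\<close> queries in expectation and is accepted with probability at
  least \<open>1 - odds ^ b\<close>, so \<open>accept_cost\<close> bounds the expected number of queries per declared one.\<close>

definition accept_cost :: real where "accept_cost = real a / (drift * (1 - odds ^ b))"

lemma odds_pos: "0 < odds" and odds_less_1: "odds < 1" and drift_pos: "0 < drift"
  using p_pos p_less_half by (auto simp: odds_def drift_def field_simps)

lemma odds_power_less_1: "odds ^ b < 1"
  using odds_pos odds_less_1 b_pos by (simp add: power_less_one_iff)

lemma accept_cost_pos: "0 < accept_cost"
  using a_pos drift_pos odds_power_less_1 by (simp add: accept_cost_def)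

lemma accept_cost_eq: "real a / drift - accept_cost * (1 - odds ^ b) = 0"
  using drift_pos odds_power_less_1 by (simp add: accept_cost_def)

lemma odds_power_harmonic:
  assumes "1 \<le> m" shows "p * odds ^ (m - 1) + (1 - p) * odds ^ Suc m = odds ^ m"
proof -
  obtain m' where m: "m = Suc m'" using assms by (cases m) auto
  have h1: "(1 - p) * odds = p" and h2: "p * (1 + odds) = odds"
    using p_pos p_less_half by (simp_all add: odds_def field_simps)
  have "p + (1 - p) * odds * odds = p * (1 + odds)"
    unfolding h1 by (simp add: algebra_simps)
  then have "p + (1 - p) * odds * odds = odds"
    using h2 by simp
  then have "odds ^ m' * (p + (1 - p) * odds * odds) = odds ^ m' * odds"
    by simp
  then show ?thesis
    by (simp add: m algebra_simps)
qed

lemma drift_step: "p * ((X + 1) / drift) + (1 - p) * ((X - 1) / drift) + 1 = X / drift"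
proof -
  have "p * (X + 1) + (1 - p) * (X - 1) = X - drift"
    by (simp add: drift_def algebra_simps)
  then have "p * ((X + 1) / drift) + (1 - p) * ((X - 1) / drift) = (X - drift) / drift"
    by (metis add_divide_distrib times_divide_eq_right)
  then show ?thesis
    using drift_pos by (simp add: diff_divide_distrib)
qed

text \<open>For a zero, \<open>(s + b) / drift\<close> is the expected time for the walk to fall from \<open>s\<close> to \<open>-b\<close>.
  For a one, \<open>(a - s) / drift\<close> bounds the remaining time, and the subtracted term is credited in
  advance: the acceptance, which has probability at least \<open>1 - odds ^ (s + b)\<close>, lowers the term
  \<open>(k - hits) * accept_cost\<close> of the time potential.\<close>

definition bit_time :: "bool \<Rightarrow> int \<Rightarrow> real" where
  "bit_time v s = (if v then (real a - s) / drift - accept_cost * (1 - odds ^ nat (s + int b))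
     else (s + int b) / drift)"

definition fp_risk :: "bool \<Rightarrow> int \<Rightarrow> real" where
  "fp_risk v s = (if v then 0 else odds ^ nat (int a - s))"

definition fn_risk :: "bool \<Rightarrow> int \<Rightarrow> real" where
  "fn_risk v s = (if v then odds ^ nat (s + int b) else 0)"

lemma bit_time_harmonic:
  assumes "- int b < s"
  shows "p * bit_time v (s + walk_incr (\<not> v)) + (1 - p) * bit_time v (s + walk_incr v) + 1
    = bit_time v s"
proof (cases v)
  case True
  define m where "m = nat (s + int b)"
  have m: "1 \<le> m" "nat (s + - 1 + int b) = m - 1" "nat (s + 1 + int b) = Suc m"
    using assms by (simp_all add: m_def)
  define X where "X = real a - s"
  have e1: "bit_time v (s + walk_incr (\<not> v)) = (X + 1) / drift - accept_cost * (1 - odds ^ (m - 1))"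
    and e2: "bit_time v (s + walk_incr v) = (X - 1) / drift - accept_cost * (1 - odds ^ Suc m)"
    and e3: "bit_time v s = X / drift - accept_cost * (1 - odds ^ m)"
    using True m by (simp_all add: bit_time_def X_def m_def algebra_simps)
  have "p * bit_time v (s + walk_incr (\<not> v)) + (1 - p) * bit_time v (s + walk_incr v) + 1
    = (p * ((X + 1) / drift) + (1 - p) * ((X - 1) / drift) + 1) - accept_cost
      + accept_cost * (p * odds ^ (m - 1) + (1 - p) * odds ^ Suc m)"
    unfolding e1 e2 by (simp add: algebra_simps)
  also have "\<dots> = bit_time v s"
    unfolding e3 drift_step odds_power_harmonic[OF m(1)] by (simp add: algebra_simps)
  finally show ?thesis .
next
  case False
  then show ?thesis
    using drift_step[of "s + int b"] by (simp add: bit_time_def algebra_simps)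
qed

lemma fp_risk_harmonic:
  assumes "s < int a"
  shows "p * fp_risk v (s + walk_incr (\<not> v)) + (1 - p) * fp_risk v (s + walk_incr v) = fp_risk v s"
proof -
  have "1 \<le> nat (int a - s)" "nat (int a - (s + 1)) = nat (int a - s) - 1"
    "nat (int a - (s + - 1)) = Suc (nat (int a - s))"
    using assms by simp_all
  then show ?thesis
    using odds_power_harmonic[of "nat (int a - s)"] by (simp add: fp_risk_def)
qed

lemma fn_risk_harmonic:
  assumes "- int b < s"
  shows "p * fn_risk v (s + walk_incr (\<not> v)) + (1 - p) * fn_risk v (s + walk_incr v) = fn_risk v s"
proof -
  have "1 \<le> nat (s + int b)" "nat (s + - 1 + int b) = nat (s + int b) - 1"
    "nat (s + 1 + int b) = Suc (nat (s + int b))"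
    using assms by simp_all
  then show ?thesis
    using odds_power_harmonic[of "nat (s + int b)"] by (simp add: fn_risk_def)
qed

definition time_potential :: "ghost \<Rightarrow> real" where
  "time_potential g = (if n \<le> pos g \<or> k \<le> hits g then 0
     else real b / drift * zeros_from x (Suc (pos g)) + real (k - hits g) * accept_cost
       + bit_time (x ! pos g) (walk g))"

definition false_pos_potential :: "ghost \<Rightarrow> real" where
  "false_pos_potential g = false_pos g + odds ^ a * zeros_from x (Suc (pos g))
     + (if pos g < n then fp_risk (x ! pos g) (walk g) else 0)"

definition false_neg_potential :: "ghost \<Rightarrow> real" where
  "false_neg_potential g = false_neg g + odds ^ b * real (k - ones_before x (Suc (pos g)))
     + (if pos g < n \<and> ones_before x (pos g) < k then fn_risk (x ! pos g) (walk g) else 0)"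

lemma bit_time_ge:
  assumes "- int b \<le> s" "s \<le> int a"
  shows "- accept_cost \<le> bit_time v s"
proof -
  have "0 \<le> accept_cost * odds ^ nat (s + int b)"
    using accept_cost_pos odds_pos by simp
  moreover have "0 \<le> (real a - s) / drift" "0 \<le> (s + real b) / drift"
    using assms drift_pos by simp_all
  ultimately show ?thesis
    using accept_cost_pos by (auto simp: bit_time_def algebra_simps)
qed

lemma time_potential_nonneg:
  assumes "ghost_inv g" shows "0 \<le> time_potential g"
proof -
  have "- accept_cost \<le> bit_time (x ! pos g) (walk g)"
    using assms by (intro bit_time_ge) (auto simp: ghost_inv_def)
  moreover have "hits g < k \<Longrightarrow> accept_cost \<le> real (k - hits g) * accept_cost"
    using accept_cost_pos by simp
  moreover have "0 \<le> real b / drift * zeros_from x (Suc (pos g))"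
    using drift_pos by simp
  ultimately show ?thesis
    by (auto simp: time_potential_def)
qed

lemma false_pos_le_potential: "false_pos g \<le> false_pos_potential g"
  using odds_pos by (simp add: false_pos_potential_def fp_risk_def)

lemma false_neg_le_potential: "false_neg g \<le> false_neg_potential g"
  using odds_pos by (simp add: false_neg_potential_def fn_risk_def)

lemma time_potential_new_bit:
  assumes "walk g = 0"
  shows "time_potential g \<le> real b / drift * zeros_from x (pos g) + real (k - hits g) * accept_cost"
proof (cases "n \<le> pos g \<or> k \<le> hits g")
  case True
  then show ?thesis
    using drift_pos accept_cost_pos by (simp add: time_potential_def)
next
  case False
  then have "zeros_from x (pos g) = of_bool (\<not> x ! pos g) + zeros_from x (Suc (pos g))"
    using length_x by (simp add: zeros_from_eq)
  then show ?thesis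
    using False assms accept_cost_eq by (simp add: time_potential_def bit_time_def algebra_simps)
qed

lemma false_pos_potential_new_bit:
  assumes "walk g = 0"
  shows "false_pos_potential g = false_pos g + odds ^ a * zeros_from x (pos g)"
proof (cases "pos g < n")
  case True
  then show ?thesis
    using assms length_x by (simp add: false_pos_potential_def fp_risk_def zeros_from_eq algebra_simps)
next
  case False
  then show ?thesis
    using length_x by (simp add: false_pos_potential_def zeros_from_def)
qed

lemma false_neg_potential_new_bit:
  assumes "walk g = 0"
  shows "false_neg_potential g = false_neg g + odds ^ b * real (k - ones_before x (pos g))"
proof (cases "pos g < n")
  case True
  then show ?thesis
    using assms length_x
    by (auto simp: false_neg_potential_def fn_risk_def ones_before_Suc of_nat_diff algebra_simps)
next
  case False
  then show ?thesis
    using length_x by (simp add: false_neg_potential_def ones_before_def)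
qed

lemma time_potential_update:
  assumes "ghost_inv g" "pos g < n" "hits g < k"
  shows "time_potential (ghost_update g y) \<le> real b / drift * zeros_from x (Suc (pos g))
    + real (k - hits g) * accept_cost + bit_time (x ! pos g) (walk g + walk_incr y)"
  using assms
proof (cases rule: ghost_update_cases[where y = y])
  case accept
  have "- accept_cost \<le> bit_time (x ! pos g) (walk g + walk_incr y)"
    using accept by (intro bit_time_ge) auto
  moreover have "real (k - Suc (hits g)) = real (k - hits g) - 1"
    using assms(3) by simp
  ultimately show ?thesis
    using time_potential_new_bit[of "ghost_update g y"] accept by (simp add: algebra_simps)
next
  case reject
  have "0 \<le> bit_time (x ! pos g) (walk g + walk_incr y)"
    using reject drift_pos by (simp add: bit_time_def)
  then show ?thesis
    using time_potential_new_bit[of "ghost_update g y"] reject by simp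
qed (use assms in \<open>simp add: time_potential_def\<close>)

lemma false_pos_potential_update:
  assumes "ghost_inv g" "pos g < n" "hits g < k"
  shows "false_pos_potential (ghost_update g y) \<le> false_pos g + odds ^ a * zeros_from x (Suc (pos g))
    + fp_risk (x ! pos g) (walk g + walk_incr y)"
  using assms
proof (cases rule: ghost_update_cases[where y = y])
  case accept
  then show ?thesis
    using false_pos_potential_new_bit[of "ghost_update g y"] by (simp add: fp_risk_def)
next
  case reject
  then show ?thesis
    using false_pos_potential_new_bit[of "ghost_update g y"] odds_pos by (simp add: fp_risk_def)
qed (use assms in \<open>simp add: false_pos_potential_def\<close>)

lemma false_neg_potential_update:
  assumes "ghost_inv g" "pos g < n" "hits g < k"
  shows "false_neg_potential (ghost_update g y) \<le> false_neg g
    + odds ^ b * real (k - ones_before x (Suc (pos g)))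
    + (if ones_before x (pos g) < k then fn_risk (x ! pos g) (walk g + walk_incr y) else 0)"
  using assms
proof (cases rule: ghost_update_cases[where y = y])
  case accept
  then show ?thesis
    using false_neg_potential_new_bit[of "ghost_update g y"] odds_pos by (simp add: fn_risk_def)
next
  case reject
  then show ?thesis
    using false_neg_potential_new_bit[of "ghost_update g y"] by (simp add: fn_risk_def)
qed (use assms in \<open>simp add: false_neg_potential_def\<close>)

lemma p_bounds: "0 \<le> p" "p \<le> 1"
  using p_pos p_less_half by simp_all

lemma time_potential_drift:
  assumes "ghost_inv g" "pos g < n" "hits g < k"
  shows "p * time_potential (ghost_update g (\<not> x ! pos g))
      + (1 - p) * time_potential (ghost_update g (x ! pos g)) + 1
    \<le> time_potential g"
proof -
  have "- int b < walk g"
    using assms(1) by (simp add: ghost_inv_def)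
  then have "p * time_potential (ghost_update g (\<not> x ! pos g))
      + (1 - p) * time_potential (ghost_update g (x ! pos g)) + 1
    \<le> real b / drift * zeros_from x (Suc (pos g)) + real (k - hits g) * accept_cost
      + bit_time (x ! pos g) (walk g)"
    by (intro convex_mix_le[OF p_bounds time_potential_update[OF assms] time_potential_update[OF assms]]
        bit_time_harmonic)
  then show ?thesis
    using assms(2,3) by (simp add: time_potential_def)
qed

lemma false_pos_potential_drift:
  assumes "ghost_inv g" "pos g < n" "hits g < k"
  shows "p * false_pos_potential (ghost_update g (\<not> x ! pos g))
      + (1 - p) * false_pos_potential (ghost_update g (x ! pos g))
    \<le> false_pos_potential g"
proof -
  have "walk g < int a"
    using assms(1) by (simp add: ghost_inv_def)
  then have "p * false_pos_potential (ghost_update g (\<not> x ! pos g))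
      + (1 - p) * false_pos_potential (ghost_update g (x ! pos g)) + 0
    \<le> false_pos g + odds ^ a * zeros_from x (Suc (pos g)) + fp_risk (x ! pos g) (walk g)"
    by (intro convex_mix_le[OF p_bounds false_pos_potential_update[OF assms]
        false_pos_potential_update[OF assms]])
      (simp add: fp_risk_harmonic)
  then show ?thesis
    using assms(2) by (simp add: false_pos_potential_def)
qed

lemma false_neg_potential_drift:
  assumes "ghost_inv g" "pos g < n" "hits g < k"
  shows "p * false_neg_potential (ghost_update g (\<not> x ! pos g))
      + (1 - p) * false_neg_potential (ghost_update g (x ! pos g))
    \<le> false_neg_potential g"
proof -
  have "- int b < walk g"
    using assms(1) by (simp add: ghost_inv_def)
  then have "p * false_neg_potential (ghost_update g (\<not> x ! pos g))
      + (1 - p) * false_neg_potential (ghost_update g (x ! pos g)) + 0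
    \<le> false_neg g + odds ^ b * real (k - ones_before x (Suc (pos g)))
      + (if ones_before x (pos g) < k then fn_risk (x ! pos g) (walk g) else 0)"
    by (intro convex_mix_le[OF p_bounds false_neg_potential_update[OF assms]
        false_neg_potential_update[OF assms]])
      (simp add: fn_risk_harmonic)
  then show ?thesis
    using assms(2) by (simp add: false_neg_potential_def)
qed

lemma scan_action_Inl:
  assumes "scan_action n k a b h = Inl i"
  shows "i = pos (ghost_run h)" "pos (ghost_run h) < n" "hits (ghost_run h) < k"
  using assms by (auto simp: scan_action_def scan_run_eq_ghost_run scan.truncate_def Let_def split: if_splits)

lemma scan_action_Inr:
  assumes "scan_action n k a b h = Inr v"
  shows "v \<Longrightarrow> k \<le> hits (ghost_run h)" "\<not> v \<Longrightarrow> hits (ghost_run h) < k \<and> n \<le> pos (ghost_run h)"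
  using assms by (auto simp: scan_action_def scan_run_eq_ghost_run scan.truncate_def Let_def split: if_splits)

lemma scan_action_query:
  assumes "scan_action n k a b h = Inl i"
  obtains g where "ghost_run h = g" "ghost_inv g" "pos g < n" "hits g < k"
    "\<And>y. ghost_run (h @ [(i, y)]) = ghost_update g y" "x ! i = x ! pos g"
  using scan_action_Inl[OF assms] ghost_inv_run by (simp add: ghost_run_snoc)

definition error_potential :: "hist \<Rightarrow> real" where
  "error_potential h =
     (if TH k x then false_neg_potential (ghost_run h) else false_pos_potential (ghost_run h))"

lemma error_potential_stop:
  assumes "scan_action n k a b h = Inr v" "v \<noteq> TH k x"
  shows "1 \<le> error_potential h"
proof -
  define g where "g = ghost_run h"
  have inv: "ghost_inv g"
    by (simp add: g_def ghost_inv_run)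
  have ones: "ones_before x n = length (filter id x)"
    using length_x by (simp add: ones_before_def)
  show ?thesis
  proof (cases "TH k x")
    case False
    have "k \<le> hits g"
      using scan_action_Inr[OF assms(1)] assms(2) False by (simp add: g_def)
    moreover have "true_pos g \<le> ones_before x n"
      using inv ones_before_mono[of "pos g" n x] by (auto simp: ghost_inv_def)
    ultimately have "1 \<le> false_pos g"
      using inv False ones by (auto simp: ghost_inv_def TH_def)
    then show ?thesis
      using False false_pos_le_potential[of g] by (simp add: error_potential_def g_def)
  next
    case True
    have "hits g < k" "pos g = n"
      using scan_action_Inr[OF assms(1)] assms(2) True inv by (auto simp: g_def ghost_inv_def)
    then have "1 \<le> false_neg g"
      using inv True ones by (auto simp: ghost_inv_def TH_def)
    then show ?thesis
      using True false_neg_le_potential[of g] by (simp add: error_potential_def g_def)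
  qed
qed

lemma time_query_potential:
  "query_potential (scan_action n k a b) p x 1 (\<lambda>h. time_potential (ghost_run h))"
  unfolding query_potential_def
proof (intro conjI allI impI)
  show "0 \<le> time_potential (ghost_run h)" for h
    by (simp add: time_potential_nonneg ghost_inv_run)
  show "p * time_potential (ghost_run (h @ [(i, \<not> x ! i)]))
      + (1 - p) * time_potential (ghost_run (h @ [(i, x ! i)])) + 1
      \<le> time_potential (ghost_run h)" if "scan_action n k a b h = Inl i" for h i
    using that by (rule scan_action_query) (simp add: time_potential_drift)
qed

lemma error_query_potential: "query_potential (scan_action n k a b) p x 0 error_potential"
  unfolding query_potential_def
proof (intro conjI allI impI)
  show "0 \<le> error_potential h" for h
    using order_trans[OF of_nat_0_le_iff false_neg_le_potential]
      order_trans[OF of_nat_0_le_iff false_pos_le_potential]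
    by (simp add: error_potential_def)
  show "p * error_potential (h @ [(i, \<not> x ! i)]) + (1 - p) * error_potential (h @ [(i, x ! i)]) + 0
      \<le> error_potential h" if "scan_action n k a b h = Inl i" for h i
    using that by (rule scan_action_query)
      (simp add: error_potential_def false_neg_potential_drift false_pos_potential_drift)
qed

theorem scan_action_error_prob:
  "error_prob (det_alg (scan_action n k a b)) p k x \<le> (if TH k x then odds ^ b * k else odds ^ a * n)"
proof -
  have "error_prob (det_alg (scan_action n k a b)) p k x \<le> error_potential []"
    using p_bounds time_query_potential error_query_potential error_potential_stop
    by (rule error_prob_det_alg_le)
  also have "\<dots> \<le> (if TH k x then odds ^ b * k else odds ^ a * n)"
    using false_pos_potential_new_bit[of "ghost_run []"] false_neg_potential_new_bit[of "ghost_run []"]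
      zeros_from_le[of x 0] length_x odds_pos
    by (simp add: error_potential_def ghost_run_def ones_before_def)
  finally show ?thesis .
qed

theorem scan_action_expected_queries:
  "expected_queries (det_alg (scan_action n k a b)) p x \<le> real b / drift * n + k * accept_cost"
proof -
  have "expected_queries (det_alg (scan_action n k a b)) p x \<le> time_potential (ghost_run [])"
    using p_bounds time_query_potential by (rule expected_queries_det_alg_le)
  also have "\<dots> \<le> real b / drift * n + k * accept_cost"
  proof (intro ennreal_leI)
    have "real b / drift * zeros_from x 0 \<le> real b / drift * n"
      using zeros_from_le[of x 0] length_x drift_pos by (intro mult_left_mono) auto
    then show "time_potential (ghost_run []) \<le> real b / drift * n + k * accept_cost"
      using time_potential_new_bit[of "ghost_run []"] by (simp add: ghost_run_def)
  qed
  finally show ?thesis .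
qed

end

section \<open>Choice of the thresholds\<close>

definition odds_exponent :: "real \<Rightarrow> real \<Rightarrow> nat" where
  "odds_exponent p c = nat \<lceil>ln c / ln ((1 - p) / p)\<rceil>"

lemma odds_exponent_bounds:
  assumes "0 < p" "p < 1/2" "1 < c"
  shows "ln c \<le> odds_exponent p c * ln ((1 - p) / p)"
    and "odds_exponent p c * ln ((1 - p) / p) \<le> ln c + ln ((1 - p) / p)"
    and "1 \<le> odds_exponent p c"
proof -
  let ?l = "ln ((1 - p) / p)"
  have l_pos: "0 < ?l"
    using assms by simp
  have pos: "0 < ln c / ?l"
    using assms l_pos by simp
  then have e: "real (odds_exponent p c) = of_int \<lceil>ln c / ?l\<rceil>"
    by (simp add: odds_exponent_def)
  have "ln c / ?l \<le> odds_exponent p c" "odds_exponent p c \<le> ln c / ?l + 1"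
    unfolding e by linarith+
  then show "ln c \<le> odds_exponent p c * ?l" "odds_exponent p c * ?l \<le> ln c + ?l"
    using l_pos by (simp_all add: field_simps)
  show "1 \<le> odds_exponent p c"
    using pos e by linarith
qed

lemma odds_power_odds_exponent:
  assumes "0 < p" "p < 1/2" "1 < c"
  shows "(p / (1 - p)) ^ odds_exponent p c \<le> 1 / c"
proof -
  have "p / (1 - p) = exp (- ln ((1 - p) / p))"
    using assms by (simp add: exp_minus)
  then have "(p / (1 - p)) ^ odds_exponent p c = exp (- (odds_exponent p c * ln ((1 - p) / p)))"
    by (metis exp_of_nat_mult mult_minus_right)
  also have "\<dots> \<le> exp (- ln c)"
    using odds_exponent_bounds(1)[OF assms] by simp
  also have "\<dots> = 1 / c"
    using assms by (simp add: exp_minus inverse_eq_divide)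
  finally show ?thesis .
qed

lemma valid_alg_scan_action: "valid_alg n (det_alg (scan_action n k a b))"
  by (rule valid_alg_det_alg) (auto simp: scan_action_def Let_def split: if_splits)

definition scan_alg :: "real \<Rightarrow> nat \<Rightarrow> nat \<Rightarrow> real \<Rightarrow> hist \<Rightarrow> (nat + bool) pmf" where
  "scan_alg p n k \<delta> = det_alg (scan_action n k (odds_exponent p (n / \<delta>)) (odds_exponent p (k / \<delta>)))"

definition scan_time_bound :: "real \<Rightarrow> nat \<Rightarrow> nat \<Rightarrow> real \<Rightarrow> real" where
  "scan_time_bound p n k \<delta> = (let a = odds_exponent p (n / \<delta>); b = odds_exponent p (k / \<delta>) in
     (n * b + k * a / (1 - (p / (1 - p)) ^ b)) / (1 - 2 * p))"

lemma scan_alg_guarantee: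
  assumes p: "0 < p" "p < 1/2" and "1 \<le> n" "1 \<le> k" "0 < \<delta>" "\<delta> < 1" "length x = n"
  shows "error_prob (scan_alg p n k \<delta>) p k x \<le> \<delta>"
    and "expected_queries (scan_alg p n k \<delta>) p x \<le> scan_time_bound p n k \<delta>"
proof -
  define a where "a = odds_exponent p (n / \<delta>)"
  define b where "b = odds_exponent p (k / \<delta>)"
  have n\<delta>: "1 < n / \<delta>" and k\<delta>: "1 < k / \<delta>"
    using assms by (simp_all add: field_simps)
  interpret scan_analysis n k a b x p
    using odds_exponent_bounds(3)[OF p n\<delta>] odds_exponent_bounds(3)[OF p k\<delta>] assms
    by unfold_locales (simp_all add: a_def b_def)
  have "odds ^ a * n \<le> \<delta>" "odds ^ b * k \<le> \<delta>"
    using odds_power_odds_exponent[OF p n\<delta>] odds_power_odds_exponent[OF p k\<delta>] assms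
    by (simp_all add: odds_def a_def b_def field_simps)
  then show "error_prob (scan_alg p n k \<delta>) p k x \<le> \<delta>"
    using scan_action_error_prob by (simp add: scan_alg_def a_def b_def split: if_splits)
  have "scan_time_bound p n k \<delta> = (n * b + k * a / (1 - odds ^ b)) / drift"
    by (simp add: scan_time_bound_def Let_def odds_def drift_def a_def b_def)
  also have "\<dots> = real b / drift * n + k * accept_cost"
    using drift_pos odds_power_less_1 by (simp add: accept_cost_def field_simps)
  finally show "expected_queries (scan_alg p n k \<delta>) p x \<le> scan_time_bound p n k \<delta>"
    using scan_action_expected_queries by (simp add: scan_alg_def a_def b_def)
qed

text \<open>Here \<open>t = k / n\<close>, \<open>l = ln ((1 - p) / p)\<close> and \<open>L = ln (k / \<delta>)\<close>.\<close>

lemma time_ratio_bounds: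
  fixes l L t a b \<rho> :: real
  assumes "0 < l" "1 \<le> L" "0 < t" "t \<le> 1" "L \<le> b * l" "b * l \<le> L + l"
    and "0 \<le> a" "a * l \<le> L - ln t + l" "0 \<le> \<rho>" "\<rho> \<le> 1/2"
  shows "1 \<le> (b + t * a / (1 - \<rho>)) * l / L"
    and "(b + t * a / (1 - \<rho>)) * l / L \<le> 1 + l / L + 2 * ((1 + l) * t - t * ln t)"
proof -
  have split: "(b + t * a / (1 - \<rho>)) * l / L = b * l / L + t / (1 - \<rho>) * (a * l / L)"
    using assms(2,10) by (simp add: field_simps)
  have b_lower: "1 \<le> b * l / L" and b_upper: "b * l / L \<le> 1 + l / L"
    using assms(2,5,6) by (simp_all add: field_simps)
  have "0 \<le> t / (1 - \<rho>) * (a * l / L)"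
    using assms by simp
  then show "1 \<le> (b + t * a / (1 - \<rho>)) * l / L"
    unfolding split using b_lower by linarith
  have "0 \<le> - ln t"
    using assms(3,4) by simp
  have "a * l / L \<le> (L + (l - ln t)) / L"
    using assms(2,8) by (intro divide_right_mono) auto
  also have "\<dots> = 1 + (l - ln t) / L"
    using assms(2) by (simp add: add_divide_distrib)
  also have "(l - ln t) / L \<le> (l - ln t) / 1"
    using assms(1,2) \<open>0 \<le> - ln t\<close> by (intro divide_left_mono) auto
  finally have "a * l / L \<le> 1 - ln t + l"
    by simp
  moreover have "t / (1 - \<rho>) \<le> 2 * t"
  proof -
    have "t * \<rho> \<le> t * (1/2)"
      using assms(3,10) by (intro mult_left_mono) auto
    then show ?thesis
      using assms(10) by (simp add: field_simps)
  qed
  moreover have "0 \<le> a * l / L"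
    using assms(1,2,7) by simp
  ultimately have "t / (1 - \<rho>) * (a * l / L) \<le> (2 * t) * (1 - ln t + l)"
    using assms(3) by (intro mult_mono) auto
  then show "(b + t * a / (1 - \<rho>)) * l / L \<le> 1 + l / L + 2 * ((1 + l) * t - t * ln t)"
    unfolding split using b_upper by (simp add: algebra_simps)
qed

lemma scan_time_bound_normalized:
  assumes p: "0 < p" "p < 1/2" and "0 < n" "1 < k / \<delta>"
  shows "scan_time_bound p n k \<delta> * KL_p p / (n * ln (k / \<delta>))
    = (odds_exponent p (k / \<delta>)
        + k / n * odds_exponent p (n / \<delta>) / (1 - (p / (1 - p)) ^ odds_exponent p (k / \<delta>)))
      * ln ((1 - p) / p) / ln (k / \<delta>)"
proof -
  define a where "a = odds_exponent p (n / \<delta>)"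
  define b where "b = odds_exponent p (k / \<delta>)"
  define \<rho> where "\<rho> = (p / (1 - p)) ^ b"
  define X where "X = n * b + k * a / (1 - \<rho>)"
  have "\<rho> < 1"
    using p odds_exponent_bounds(3)[OF p assms(4)] by (simp add: \<rho>_def b_def power_less_one_iff)
  then have nz: "1 - \<rho> \<noteq> 0" "1 - 2 * p \<noteq> 0" "real n \<noteq> 0" "ln (k / \<delta>) \<noteq> 0"
    using assms by auto
  have S: "scan_time_bound p n k \<delta> = X / (1 - 2 * p)"
    by (simp add: scan_time_bound_def Let_def a_def b_def \<rho>_def X_def)
  have KL: "KL_p p = (1 - 2 * p) * ln ((1 - p) / p)"
    by (simp add: KL_p_def)
  have "scan_time_bound p n k \<delta> * KL_p p / (n * ln (k / \<delta>)) = X / n * ln ((1 - p) / p) / ln (k / \<delta>)"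
    unfolding S KL using nz by (simp add: field_simps)
  also have "X / n = b + k / n * a / (1 - \<rho>)"
    using nz by (simp add: X_def add_divide_distrib)
  finally show ?thesis
    by (simp add: a_def b_def \<rho>_def)
qed

definition scan_excess :: "real \<Rightarrow> nat \<Rightarrow> nat \<Rightarrow> real \<Rightarrow> real" where
  "scan_excess p n k \<delta> = scan_time_bound p n k \<delta> * KL_p p / (n * ln (k / \<delta>)) - 1"

lemma scan_excess_bounds:
  assumes p: "0 < p" "p < 1/2" and k: "1 \<le> k" "k \<le> n" and \<delta>: "0 < \<delta>" "\<delta> \<le> 1/2"
    and L: "1 \<le> ln (k / \<delta>)"
  shows "0 \<le> scan_excess p n k \<delta>"
    and "scan_excess p n k \<delta> \<le> ln ((1 - p) / p) / ln (k / \<delta>)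
      + 2 * ((1 + ln ((1 - p) / p)) * (k / n) - k / n * ln (k / n))"
proof -
  define l where "l = ln ((1 - p) / p)"
  define a where "a = odds_exponent p (n / \<delta>)"
  define b where "b = odds_exponent p (k / \<delta>)"
  define \<rho> where "\<rho> = (p / (1 - p)) ^ b"
  have n\<delta>: "1 < n / \<delta>" and k\<delta>: "1 < k / \<delta>"
    using k \<delta> by (simp_all add: field_simps)
  have l: "0 < l"
    using p by (simp add: l_def)
  have "ln (n / \<delta>) = ln (k / \<delta>) - ln (k / n)"
    using k \<delta> by (simp add: ln_div)
  then have a: "a * l \<le> ln (k / \<delta>) - ln (k / n) + l"
    using odds_exponent_bounds(2)[OF p n\<delta>] by (simp add: a_def l_def)
  have "\<rho> \<le> \<delta> / k"
    using odds_power_odds_exponent[OF p k\<delta>] by (simp add: \<rho>_def b_def)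
  also have "\<dots> \<le> 1/2"
    using k \<delta> by (simp add: field_simps)
  finally have \<rho>: "0 \<le> \<rho>" "\<rho> \<le> 1/2"
    using p by (simp_all add: \<rho>_def)
  have "scan_excess p n k \<delta> = (b + k / n * a / (1 - \<rho>)) * l / ln (k / \<delta>) - 1"
    using scan_time_bound_normalized[OF p _ k\<delta>] k by (simp add: scan_excess_def a_def b_def \<rho>_def l_def)
  moreover have "1 \<le> (b + k / n * a / (1 - \<rho>)) * l / ln (k / \<delta>)"
    and "(b + k / n * a / (1 - \<rho>)) * l / ln (k / \<delta>)
      \<le> 1 + l / ln (k / \<delta>) + 2 * ((1 + l) * (k / n) - k / n * ln (k / n))"
    by (rule time_ratio_bounds[OF l L _ _ _ _ _ a \<rho>];
        use odds_exponent_bounds[OF p k\<delta>] k in \<open>simp add: b_def l_def\<close>)+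
  ultimately show "0 \<le> scan_excess p n k \<delta>"
    and "scan_excess p n k \<delta> \<le> ln ((1 - p) / p) / ln (k / \<delta>)
      + 2 * ((1 + ln ((1 - p) / p)) * (k / n) - k / n * ln (k / n))"
    unfolding l_def by linarith+
qed

lemma scan_time_bound_eq_excess:
  assumes "0 < p" "p < 1/2" "0 < n" "1 \<le> ln (k / \<delta>)"
  shows "scan_time_bound p n k \<delta> = (1 + scan_excess p n k \<delta>) * n * ln (k / \<delta>) / KL_p p"
proof -
  have "real n \<noteq> 0" "ln (k / \<delta>) \<noteq> 0" "KL_p p \<noteq> 0"
    using assms by (auto simp: KL_p_def)
  then show ?thesis
    by (simp add: scan_excess_def)
qed

lemma filterlim_ln_div_at_top:
  fixes k :: "nat \<Rightarrow> nat" and \<delta> :: "nat \<Rightarrow> real"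
  assumes "\<forall>n. 1 \<le> k n" "\<forall>n. 0 < \<delta> n" "\<delta> \<longlonglongrightarrow> 0"
  shows "filterlim (\<lambda>n. ln (k n / \<delta> n)) at_top sequentially"
proof (rule filterlim_at_top_mono)
  have "filterlim \<delta> (at_right 0) sequentially"
    using assms(2,3) by (intro tendsto_imp_filterlim_at_right) auto
  then have "filterlim (\<lambda>n. ln (\<delta> n)) at_bot sequentially"
    by (rule filterlim_compose[OF ln_at_0])
  then show "filterlim (\<lambda>n. - ln (\<delta> n)) at_top sequentially"
    by (simp add: filterlim_uminus_at_bot)
  have "- ln (\<delta> n) \<le> ln (k n / \<delta> n)" for n
  proof -
    have "0 < real (k n)" "0 < \<delta> n"
      using assms(1,2) by (auto simp: Suc_le_eq)
    then show ?thesis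
      using assms(1) by (simp add: ln_div)
  qed
  then show "\<forall>\<^sub>F n in sequentially. - ln (\<delta> n) \<le> ln (k n / \<delta> n)"
    by simp
qed

lemma excess_tendsto_0:
  fixes L t :: "nat \<Rightarrow> real"
  assumes "filterlim L at_top sequentially" "t \<longlonglongrightarrow> 0" "\<forall>\<^sub>F n in sequentially. 0 < t n"
  shows "(\<lambda>n. l / L n + 2 * ((1 + l) * t n - t n * ln (t n))) \<longlonglongrightarrow> 0"
proof -
  have "((\<lambda>u::real. u * ln u) \<longlongrightarrow> 0) (at_right 0)"
    by real_asymp
  moreover have "filterlim t (at_right 0) sequentially"
    using assms(2,3) by (rule tendsto_imp_filterlim_at_right)
  ultimately have "(\<lambda>n. t n * ln (t n)) \<longlonglongrightarrow> 0"
    by (rule filterlim_compose)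
  then have "(\<lambda>n. l * inverse (L n) + 2 * ((1 + l) * t n - t n * ln (t n))) \<longlonglongrightarrow> l * 0 + 2 * ((1 + l) * 0 - 0)"
    by (intro tendsto_intros tendsto_inverse_0_at_top assms(1,2))
  then show ?thesis
    by (simp add: divide_inverse)
qed

lemma eventually_scan_regime:
  fixes k :: "nat \<Rightarrow> nat" and \<delta> :: "nat \<Rightarrow> real"
  assumes "\<forall>n. 1 \<le> k n" "(\<lambda>n. real (k n) / real n) \<longlonglongrightarrow> 0" "\<forall>n. 0 < \<delta> n" "\<delta> \<longlonglongrightarrow> 0"
  shows "\<forall>\<^sub>F n in sequentially. 1 \<le> ln (k n / \<delta> n) \<and> k n \<le> n \<and> \<delta> n \<le> 1/2"
proof -
  have "\<forall>\<^sub>F n in sequentially. 1 \<le> ln (k n / \<delta> n)"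
    using filterlim_ln_div_at_top[OF assms(1,3,4)] by (simp add: filterlim_at_top)
  moreover have "\<forall>\<^sub>F n in sequentially. real (k n) / real n < 1"
    using assms(2) by (rule order_tendstoD) simp
  moreover have "\<forall>\<^sub>F n in sequentially. \<delta> n < 1/2"
    using assms(4) by (rule order_tendstoD) simp
  moreover have "\<forall>\<^sub>F n in sequentially. 1 \<le> n"
    by (rule eventually_ge_at_top)
  ultimately show ?thesis
    by eventually_elim (simp add: divide_less_eq)
qed

lemma scan_excess_tendsto_0:
  fixes k :: "nat \<Rightarrow> nat" and \<delta> :: "nat \<Rightarrow> real"
  assumes p: "0 < p" "p < 1/2"
    and k: "\<forall>n. 1 \<le> k n" "(\<lambda>n. real (k n) / real n) \<longlonglongrightarrow> 0" and \<delta>: "\<forall>n. 0 < \<delta> n" "\<delta> \<longlonglongrightarrow> 0"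
  shows "(\<lambda>n. scan_excess p n (k n) (\<delta> n)) \<longlonglongrightarrow> 0"
proof (rule tendsto_sandwich[OF _ _ tendsto_const excess_tendsto_0])
  show "filterlim (\<lambda>n. ln (k n / \<delta> n)) at_top sequentially"
    using k(1) \<delta> by (rule filterlim_ln_div_at_top)
  show "\<forall>\<^sub>F n in sequentially. 0 < real (k n) / real n"
    using eventually_ge_at_top[of 1] by eventually_elim (use k(1) in \<open>simp add: Suc_le_eq\<close>)
  show "\<forall>\<^sub>F n in sequentially. 0 \<le> scan_excess p n (k n) (\<delta> n)"
    and "\<forall>\<^sub>F n in sequentially. scan_excess p n (k n) (\<delta> n) \<le> ln ((1 - p) / p) / ln (k n / \<delta> n)
      + 2 * ((1 + ln ((1 - p) / p)) * (k n / n) - k n / n * ln (k n / n))"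
    using eventually_scan_regime[OF k \<delta>]
    by (eventually_elim, use scan_excess_bounds[OF p] k(1) \<delta>(1) in auto)+
qed (fact k(2))

lemma valid_alg_scan_alg: "valid_alg n (scan_alg p n k \<delta>)"
  by (simp add: scan_alg_def valid_alg_scan_action)

theorem theorem2:
  fixes p :: real and k :: "nat \<Rightarrow> nat" and \<delta> :: "nat \<Rightarrow> real"
  assumes "0 < p" and "p < 1/2"
    and "\<forall>n. 1 \<le> k n" and "(\<lambda>n. real (k n) / real n) \<longlonglongrightarrow> 0"
    and "\<forall>n. 0 < \<delta> n" and "\<delta> \<longlonglongrightarrow> 0"
  shows "\<exists>\<epsilon> :: nat \<Rightarrow> real. \<epsilon> \<longlonglongrightarrow> 0 \<and>
    (\<forall>\<^sub>F n in sequentially. \<exists>A. valid_alg n A \<and>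
       (\<forall>x. length x = n \<longrightarrow>
          error_prob A p (k n) x \<le> \<delta> n \<and>
          expected_queries A p x \<le>
            ennreal ((1 + \<epsilon> n) * real n * ln (real (k n) / \<delta> n) / KL_p p)))"
proof -
  have "\<forall>\<^sub>F n in sequentially. \<exists>A. valid_alg n A \<and> (\<forall>x. length x = n \<longrightarrow>
      error_prob A p (k n) x \<le> \<delta> n \<and> expected_queries A p x
        \<le> ennreal ((1 + scan_excess p n (k n) (\<delta> n)) * real n * ln (k n / \<delta> n) / KL_p p))"
    using eventually_scan_regime[OF assms(3-6)]
  proof eventually_elim
    case (elim n)
    have "1 \<le> k n" "0 < \<delta> n"
      using assms(3,5) by auto
    with elim have n: "1 \<le> n" "1 \<le> k n" "0 < \<delta> n" "\<delta> n < 1"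
      by auto
    have "scan_time_bound p n (k n) (\<delta> n)
        = (1 + scan_excess p n (k n) (\<delta> n)) * real n * ln (k n / \<delta> n) / KL_p p"
      using elim n by (intro scan_time_bound_eq_excess[OF assms(1,2)]) auto
    then show ?case
      using valid_alg_scan_alg scan_alg_guarantee[OF assms(1,2) n]
      by (intro exI[of _ "scan_alg p n (k n) (\<delta> n)"]) auto
  qed
  with scan_excess_tendsto_0[OF assms] show ?thesis
    by blast
qed

end
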